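(* Let $X$ be a Tychonoff $\Delta$-space and let $\varphi:X\to Y$ be a closed continuous surjection onto a Tychonoff space $Y$ all of whose fibers $\varphi^{-1}(y)$ are finite. Then $Y$ is a $\Delta$-space.
   Context: A topological space $X$ is a $\Delta$-space if for every decreasing sequence $\{D_n:n\in\omega\}$ of subsets of $X$ with $\bigcap_n D_n=\emptyset$ there is a decreasing sequence $\{V_n:n\in\omega\}$ of open subsets of $X$ with $D_n\subseteq V_n$ for all $n$ and $\bigcap_n V_n=\emptyset$. *)

theory Defs
  imports "HOL-Analysis.Analysis"
begin

definition tychonoff_space :: "'a topology \<Rightarrow> bool" where
  "tychonoff_space X \<longleftrightarrow> completely_regular_space X \<and> Hausdorff_space X"

definition delta_space :: "'a topology \<Rightarrow> bool" where
  "delta_space X \<longleftrightarrow>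
     (\<forall>D :: nat \<Rightarrow> 'a set.
        (\<forall>n. D n \<subseteq> topspace X) \<and> (\<forall>n. D (Suc n) \<subseteq> D n) \<and> (\<Inter>n. D n) = {} \<longrightarrow>
        (\<exists>V :: nat \<Rightarrow> 'a set.
           (\<forall>n. openin X (V n)) \<and> (\<forall>n. V (Suc n) \<subseteq> V n) \<and>
           (\<forall>n. D n \<subseteq> V n) \<and> (\<Inter>n. V n) = {}))"

end

theory Submission
  imports Defs
begin

text \<open>Pull the decreasing family
  back to X, expand it there by open sets V n, and push these forward by the small image
  topspace Y - \<phi> ` (topspace X - V n): it is open because \<phi> is closed, it contains D n
  because the whole fibre over a point of D n lies in V n, and a point in all of them would be
  the image of a point lying in every V n.\<close>

lemma delta_spaceI:
  assumes "\<And>D. \<lbrakk>\<And>n. D n \<subseteq> topspace X; \<And>n. D (Suc n) \<subseteq> D n; (\<Inter>n. D n) = {}\<rbrakk>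
            \<Longrightarrow> \<exists>V. (\<forall>n. openin X (V n)) \<and> (\<forall>n. V (Suc n) \<subseteq> V n) \<and>
                    (\<forall>n. D n \<subseteq> V n) \<and> (\<Inter>n. V n) = {}"
  shows "delta_space X"
  unfolding delta_space_def by (metis assms)

lemma delta_spaceE:
  assumes "delta_space X"
    and "\<And>n. D n \<subseteq> topspace X" and "\<And>n. D (Suc n) \<subseteq> D n" and "(\<Inter>n. D n) = {}"
  obtains V where "\<And>n. openin X (V n)" and "\<And>n. V (Suc n) \<subseteq> V n"
    and "\<And>n. D n \<subseteq> V n" and "(\<Inter>n. V n) = {}"
  using assms unfolding delta_space_def by metis

lemma openin_closed_map_small_image:
  assumes "closed_map X Y f" and "openin X U"
  shows "openin Y (topspace Y - f ` (topspace X - U))"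
proof -
  have "closedin X (topspace X - U)"
    using assms(2) by blast
  then have "closedin Y (f ` (topspace X - U))"
    using assms(1) unfolding closed_map_def by blast
  then show ?thesis
    by blast
qed

lemma delta_space_closed_map_image:
  assumes "delta_space X" and "closed_map X Y f" and "f ` topspace X = topspace Y"
  shows "delta_space Y"
proof (rule delta_spaceI)
  fix D
  assume D_sub: "\<And>n. D n \<subseteq> topspace Y" and D_dec: "\<And>n. D (Suc n) \<subseteq> D n"
    and D_empty: "(\<Inter>n. D n) = {}"
  define E where "E n = {x \<in> topspace X. f x \<in> D n}" for n
  have E_sub: "E n \<subseteq> topspace X" for n
    by (auto simp: E_def)
  have E_dec: "E (Suc n) \<subseteq> E n" for n
    using D_dec by (auto simp: E_def)
  have E_empty: "(\<Inter>n. E n) = {}"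
    using D_empty by (auto simp: E_def)
  obtain V where V_open: "\<And>n. openin X (V n)" and V_dec: "\<And>n. V (Suc n) \<subseteq> V n"
    and E_V: "\<And>n. E n \<subseteq> V n" and V_empty: "(\<Inter>n. V n) = {}"
    by (rule delta_spaceE[OF assms(1) E_sub E_dec E_empty], rule that)
  define W where "W n = topspace Y - f ` (topspace X - V n)" for n
  have W_open: "openin Y (W n)" for n
    unfolding W_def using openin_closed_map_small_image[OF assms(2) V_open] .
  have W_dec: "W (Suc n) \<subseteq> W n" for n
    using V_dec[of n] unfolding W_def by auto
  have D_W: "D n \<subseteq> W n" for n
  proof
    fix y
    assume "y \<in> D n"
    then have "{x \<in> topspace X. f x = y} \<subseteq> V n"
      using E_V[of n] unfolding E_def by auto
    then show "y \<in> W n"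
      using D_sub \<open>y \<in> D n\<close> unfolding W_def by auto
  qed
  have W_empty: "(\<Inter>n. W n) = {}"
  proof -
    have "y \<notin> (\<Inter>n. W n)" for y
    proof
      assume y: "y \<in> (\<Inter>n. W n)"
      then have "y \<in> f ` topspace X"
        using assms(3) unfolding W_def by auto
      then obtain x where x: "x \<in> topspace X" "f x = y"
        by blast
      obtain n where "x \<notin> V n"
        using V_empty by auto
      then show False
        using x y unfolding W_def by auto
    qed
    then show ?thesis
      by blast
  qed
  show "\<exists>W. (\<forall>n. openin Y (W n)) \<and> (\<forall>n. W (Suc n) \<subseteq> W n) \<and>
                        (\<forall>n. D n \<subseteq> W n) \<and> (\<Inter>n. W n) = {}"
    using W_open W_dec D_W W_empty by (intro exI[of _ W]) blast
qed

theorem proposition5p3: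
  fixes X :: "'a topology" and Y :: "'b topology" and \<phi> :: "'a \<Rightarrow> 'b"
  assumes "tychonoff_space X" and "delta_space X"
    and "tychonoff_space Y"
    and "continuous_map X Y \<phi>" and "closed_map X Y \<phi>"
    and "\<phi> ` topspace X = topspace Y"
    and "\<And>y. y \<in> topspace Y \<Longrightarrow> finite {x \<in> topspace X. \<phi> x = y}"
  shows "delta_space Y"
  using delta_space_closed_map_image[OF assms(2) assms(5) assms(6)] .

end
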